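(* There is a universal constant $C>0$ such that for every $n\geq2$ and $V>0$, $$\mathrm{GW}(K_n^0(V)) = \mathbb{E}\sup_{\theta:\ \mathrm{TV}(\theta)\le V,\ \overline\theta = 0}\langle Z,\theta\rangle \leq C\big(V\log n\,\log(1 + 2Vn^2) + 1\big).$$
   Context: $K_n^0(V) = \{\theta\in\mathbb{R}^{n\times n}: \mathrm{TV}(\theta)\le V,\ \overline\theta=0\}$, where $\mathrm{TV}(\theta)$ is the unnormalized total variation (sum of $|\theta_u-\theta_v|$ over horizontally/vertically adjacent entries) and $\overline\theta = n^{-2}\sum_{i,j}\theta_{ij}$. For $A\subseteq\mathbb{R}^{n\times n}$, $\mathrm{GW}(A) = \mathbb{E}\sup_{v\in A}\langle Z,v\rangle$ with $Z$ an $n\times n$ matrix of i.i.d. standard normals and $\langle\cdot,\cdot\rangle$ the entrywise inner product. *)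

theory Defs
  imports "HOL-Probability.Probability"
begin

text \<open>n x n matrices are functions on index pairs (i,j) with 0 <= i,j < n,
  extended by zero outside the index square.\<close>

definition grid :: "nat \<Rightarrow> (nat \<times> nat) set" where
  "grid n = {..<n} \<times> {..<n}"

definition TV :: "nat \<Rightarrow> (nat \<times> nat \<Rightarrow> real) \<Rightarrow> real" where
  "TV n \<theta> =
     (\<Sum>i<n. \<Sum>j<n - 1. \<bar>\<theta> (i, Suc j) - \<theta> (i, j)\<bar>)
   + (\<Sum>i<n - 1. \<Sum>j<n. \<bar>\<theta> (Suc i, j) - \<theta> (i, j)\<bar>)"

definition mean :: "nat \<Rightarrow> (nat \<times> nat \<Rightarrow> real) \<Rightarrow> real" where
  "mean n \<theta> = (\<Sum>p\<in>grid n. \<theta> p) / (real n)^2"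

definition inner_mat :: "nat \<Rightarrow> (nat \<times> nat \<Rightarrow> real) \<Rightarrow> (nat \<times> nat \<Rightarrow> real) \<Rightarrow> real" where
  "inner_mat n Z v = (\<Sum>p\<in>grid n. Z p * v p)"

definition K0 :: "nat \<Rightarrow> real \<Rightarrow> (nat \<times> nat \<Rightarrow> real) set" where
  "K0 n V = {\<theta>. (\<forall>p. p \<notin> grid n \<longrightarrow> \<theta> p = 0) \<and> TV n \<theta> \<le> V \<and> mean n \<theta> = 0}"

definition gauss_mat :: "nat \<Rightarrow> (nat \<times> nat \<Rightarrow> real) measure" where
  "gauss_mat n = PiM (grid n) (\<lambda>_. density lborel std_normal_density)"

text \<open>Gaussian width, as an extended nonnegative value (the sup is >= 0 whenever 0 is in A).\<close>
definition GW :: "nat \<Rightarrow> (nat \<times> nat \<Rightarrow> real) set \<Rightarrow> ennreal" where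
  "GW n A = (\<integral>\<^sup>+ Z. (SUP v\<in>A. ennreal (inner_mat n Z v)) \<partial>gauss_mat n)"

end

(*
  A chaining argument over the dyadic partition of the n x n grid. Choose D with n <= 2^D and
  telescope <Z, theta> over the levels d < D of the partition into 4^d blocks: level d contributes
  the sum over blocks of Z(child) * (avg theta(child) - avg theta(parent)), where Z(child) is the
  sum of Z over the child block. Level 0 vanishes because theta has mean zero, and at level D the
  blocks are single cells. Connecting two cells of a parent block by a row path and a column path
  shows that a child of side at least m (about n / 2^(d+1)) has average within TV(parent) / m of
  the parent's, so level d contributes at most 4 max |Z(child)| / m * TV(theta).

  Since a child has at most 4 m^2 cells, each Z(child) / m has exponential moments
  E exp(+-Z(child) / m) <= e^2. Bounding the maximum over all children of all levels by the log of
  the sum of these exponentials and applying ln x <= x / a + ln a - 1 in expectation gives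
  GW <= 4 D V ln (2 e^2 D 4^D) = O(V (log n)^2), which is dominated by the stated bound.
*)

theory Submission
  imports Defs
begin

section \<open>Exponential moments of Gaussian block sums\<close>

lemma nn_integral_exp_std_normal:
  "(\<integral>\<^sup>+ x. ennreal (exp (c * x)) \<partial>density lborel std_normal_density) = ennreal (exp (c^2/2))"
proof -
  have shift: "std_normal_density x * exp (c * x) = exp (c^2/2) * normal_density c 1 x" for x
    unfolding normal_density_def by (simp add: exp_add[symmetric] power2_eq_square field_simps)
  have "(\<integral>\<^sup>+ x. ennreal (exp (c * x)) \<partial>density lborel std_normal_density)
      = (\<integral>\<^sup>+ x. ennreal (exp (c^2/2)) * ennreal (normal_density c 1 x) \<partial>lborel)"
    by (subst nn_integral_density) (auto simp: ennreal_mult'[symmetric] shift)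
  also have "\<dots> = ennreal (exp (c^2/2)) * (\<integral>\<^sup>+ x. ennreal (normal_density c 1 x) \<partial>lborel)"
    by (rule nn_integral_cmult) simp
  also have "(\<integral>\<^sup>+ x. ennreal (normal_density c 1 x) \<partial>lborel) = 1"
    by (subst nn_integral_eq_integral) auto
  finally show ?thesis by simp
qed

lemma prob_space_gauss_mat: "prob_space (gauss_mat n)"
  unfolding gauss_mat_def by (intro prob_space_PiM) (simp add: prob_space_normal_density)

lemma measurable_gauss_mat_sum:
  assumes "b \<subseteq> grid n"
  shows "(\<lambda>Z. \<Sum>p\<in>b. Z p) \<in> borel_measurable (gauss_mat n)"
  unfolding gauss_mat_def
  by (intro borel_measurable_sum measurable_component_singleton) (use assms in auto)

lemma nn_integral_exp_gauss_mat_sum: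
  assumes b: "b \<subseteq> grid n"
  shows "(\<integral>\<^sup>+ Z. ennreal (exp (c * (\<Sum>p\<in>b. Z p))) \<partial>gauss_mat n)
       = ennreal (exp (real (card b) * c^2/2))"
proof -
  let ?N = "density lborel std_normal_density"
  let ?f = "\<lambda>p x. if p \<in> b then ennreal (exp (c * x)) else 1"
  interpret N: prob_space ?N by (simp add: prob_space_normal_density)
  interpret product_sigma_finite "\<lambda>_::nat \<times> nat. ?N"
    by (simp add: product_sigma_finite_def N.sigma_finite_measure_axioms)
  have fin: "finite (grid n)" by (simp add: grid_def)
  have "(\<integral>\<^sup>+ Z. ennreal (exp (c * (\<Sum>p\<in>b. Z p))) \<partial>gauss_mat n)
      = (\<integral>\<^sup>+ Z. (\<Prod>p\<in>grid n. ?f p (Z p)) \<partial>gauss_mat n)"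
  proof (rule nn_integral_cong)
    fix Z :: "nat \<times> nat \<Rightarrow> real"
    have "ennreal (exp (c * (\<Sum>p\<in>b. Z p))) = (\<Prod>p\<in>b. ennreal (exp (c * Z p)))"
      using finite_subset[OF b fin] by (simp add: sum_distrib_left exp_sum prod_ennreal)
    then show "ennreal (exp (c * (\<Sum>p\<in>b. Z p))) = (\<Prod>p\<in>grid n. ?f p (Z p))"
      using fin b by (simp add: prod.If_cases Int_absorb1)
  qed
  also have "\<dots> = (\<Prod>p\<in>grid n. integral\<^sup>N ?N (?f p))"
    unfolding gauss_mat_def by (rule product_nn_integral_prod[OF fin]) auto
  also have "\<dots> = (\<Prod>p\<in>grid n. if p \<in> b then ennreal (exp (c^2/2)) else 1)"
    using N.emeasure_space_1 by (intro prod.cong) (auto simp: nn_integral_exp_std_normal)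
  also have "\<dots> = ennreal (exp (c^2/2)) ^ card b"
    using fin b by (simp add: prod.If_cases Int_absorb1)
  also have "\<dots> = ennreal (exp (real (card b) * c^2/2))"
    by (simp add: ennreal_power exp_of_nat_mult[symmetric] mult.assoc)
  finally show ?thesis .
qed

lemma nn_integral_ln_le:
  assumes M: "prob_space M" and S: "S \<in> borel_measurable M" "\<And>x. x \<in> space M \<Longrightarrow> 0 < S x"
    and int: "(\<integral>\<^sup>+ x. ennreal (S x) \<partial>M) \<le> ennreal a" and a: "exp 1 \<le> a" and c: "0 \<le> c"
  shows "(\<integral>\<^sup>+ x. ennreal (c * ln (S x)) \<partial>M) \<le> ennreal (c * ln a)"
proof -
  have a0: "0 < a" using a exp_gt_zero[of 1] by linarith
  have ln_a: "1 \<le> ln a" using a a0 by (metis exp_gt_zero ln_exp ln_le_cancel_iff)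
  have "(\<integral>\<^sup>+ x. ennreal (c * ln (S x)) \<partial>M)
      \<le> (\<integral>\<^sup>+ x. ennreal (c / a) * ennreal (S x) + ennreal (c * (ln a - 1)) \<partial>M)"
  proof (rule nn_integral_mono)
    fix x assume x: "x \<in> space M"
    \<comment> \<open>the tangent line of \<open>ln\<close> at \<open>a\<close>\<close>
    have "ln (S x / a) \<le> S x / a - 1" using S(2)[OF x] a0 by (intro ln_le_minus_one) simp
    then have "ln (S x) \<le> S x / a + (ln a - 1)"
      using S(2)[OF x] a0 by (simp add: ln_div)
    then have "c * ln (S x) \<le> c * (S x / a + (ln a - 1))"
      by (rule mult_left_mono[OF _ c])
    then have "c * ln (S x) \<le> c / a * S x + c * (ln a - 1)"
      by (simp add: algebra_simps)
    then show "ennreal (c * ln (S x)) \<le> ennreal (c / a) * ennreal (S x) + ennreal (c * (ln a - 1))"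
      using S(2)[OF x] a0 ln_a c by (simp add: ennreal_mult'[symmetric] ennreal_plus[symmetric] del: ennreal_plus)
  qed
  also have "\<dots> = ennreal (c / a) * (\<integral>\<^sup>+ x. ennreal (S x) \<partial>M) + ennreal (c * (ln a - 1))"
    using S(1) by (simp add: nn_integral_add nn_integral_cmult prob_space.emeasure_space_1[OF M])
  also have "\<dots> \<le> ennreal (c / a) * ennreal a + ennreal (c * (ln a - 1))"
    by (intro add_mono mult_left_mono int) auto
  also have "\<dots> = ennreal (c + c * (ln a - 1))"
    using a0 ln_a c by (simp add: ennreal_mult'[symmetric] ennreal_plus[symmetric] del: ennreal_plus)
  also have "\<dots> = ennreal (c * ln a)"
    by (simp add: algebra_simps)
  finally show ?thesis .
qed

section \<open>Dyadic partitions of the grid\<close>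

text \<open>Level \<open>d\<close> of the dyadic partition of \<open>{..<n}\<close>: \<open>2^d\<close> consecutive, possibly empty,
  intervals of length \<open>n div 2^d\<close> or \<open>n div 2^d + 1\<close>.\<close>

definition dyadic_cut :: "nat \<Rightarrow> nat \<Rightarrow> nat \<Rightarrow> nat" where
  "dyadic_cut n d t = t * n div 2^d"

definition dyadic_interval :: "nat \<Rightarrow> nat \<Rightarrow> nat \<Rightarrow> nat set" where
  "dyadic_interval n d t = {dyadic_cut n d t..<dyadic_cut n d (Suc t)}"

definition dyadic_block :: "nat \<Rightarrow> nat \<Rightarrow> nat \<Rightarrow> nat \<Rightarrow> (nat \<times> nat) set" where
  "dyadic_block n d t u = dyadic_interval n d t \<times> dyadic_interval n d u"

lemma dyadic_cut_mono: "t \<le> t' \<Longrightarrow> dyadic_cut n d t \<le> dyadic_cut n d t'"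
  unfolding dyadic_cut_def by (intro div_le_mono mult_le_mono1)

lemma dyadic_cut_0 [simp]: "dyadic_cut n d 0 = 0"
  by (simp add: dyadic_cut_def)

lemma dyadic_cut_top [simp]: "dyadic_cut n d (2^d) = n"
  by (simp add: dyadic_cut_def)

lemma dyadic_cut_double: "dyadic_cut n (Suc d) (2 * t) = dyadic_cut n d t"
  unfolding dyadic_cut_def by (simp add: mult.assoc div_mult_mult1)

lemma dyadic_cut_le: "t < 2^d \<Longrightarrow> dyadic_cut n d (Suc t) \<le> n"
  using dyadic_cut_mono[of "Suc t" "2^d" n d] by simp

lemma finite_dyadic_interval [simp]: "finite (dyadic_interval n d t)"
  by (simp add: dyadic_interval_def)

lemma dyadic_block_subset_grid: "t < 2^d \<Longrightarrow> u < 2^d \<Longrightarrow> dyadic_block n d t u \<subseteq> grid n"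
  using dyadic_cut_le[of t d n] dyadic_cut_le[of u d n]
  by (auto simp: dyadic_block_def dyadic_interval_def grid_def)

lemma dyadic_interval_subset_parent: "dyadic_interval n (Suc d) t \<subseteq> dyadic_interval n d (t div 2)"
proof -
  have "dyadic_cut n d (t div 2) = dyadic_cut n (Suc d) (2 * (t div 2))"
    by (simp add: dyadic_cut_double)
  also have "\<dots> \<le> dyadic_cut n (Suc d) t" by (rule dyadic_cut_mono) simp
  finally have lower: "dyadic_cut n d (t div 2) \<le> dyadic_cut n (Suc d) t" .
  have "dyadic_cut n (Suc d) (Suc t) \<le> dyadic_cut n (Suc d) (2 * Suc (t div 2))"
    by (rule dyadic_cut_mono) presburger
  also have "\<dots> = dyadic_cut n d (Suc (t div 2))" by (rule dyadic_cut_double)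
  finally have upper: "dyadic_cut n (Suc d) (Suc t) \<le> dyadic_cut n d (Suc (t div 2))" .
  show ?thesis unfolding dyadic_interval_def using lower upper by auto
qed

lemma card_dyadic_interval: "card (dyadic_interval n d t) = dyadic_cut n d (Suc t) - dyadic_cut n d t"
  by (simp add: dyadic_interval_def)

lemma card_dyadic_interval_ge: "n div 2^d \<le> card (dyadic_interval n d t)"
proof -
  have "t * n div 2^d + n div 2^d \<le> (t * n + n) div 2^d"
    unfolding div_add1_eq[of "t * n" n "2^d"] by simp
  then show ?thesis unfolding card_dyadic_interval dyadic_cut_def by (simp add: add.commute)
qed

lemma card_dyadic_interval_le: "card (dyadic_interval n d t) \<le> n div 2^d + 1"
proof -
  have "t * n mod 2^d + n mod 2^d < 2 * 2^d"
    using add_strict_mono[OF mod_less_divisor[of "2^d" "t * n"] mod_less_divisor[of "2^d" n]]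
    by (simp add: mult_2)
  then have "(t * n mod 2^d + n mod 2^d) div 2^d < 2" by (rule less_mult_imp_div_less)
  then have "(t * n + n) div 2^d \<le> t * n div 2^d + n div 2^d + 1"
    unfolding div_add1_eq[of "t * n" n "2^d"] by simp
  then show ?thesis unfolding card_dyadic_interval dyadic_cut_def by (simp add: add.commute)
qed

lemma card_dyadic_interval_le_1: "n \<le> 2^d \<Longrightarrow> card (dyadic_interval n d t) \<le> 1"
proof -
  assume "n \<le> 2^d"
  then have "(t * n + n) div 2^d \<le> (t * n + 2^d) div 2^d" by (intro div_le_mono) simp
  then show ?thesis unfolding card_dyadic_interval dyadic_cut_def by (simp add: add.commute)
qed

lemma sum_consecutive_intervals:
  assumes "mono (l :: nat \<Rightarrow> nat)"
  shows "(\<Sum>t<k. sum f {l t..<l (Suc t)}) = sum f {l 0..<l k}"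
proof (induction k)
  case (Suc k)
  show ?case using Suc monoD[OF assms, of 0 k] monoD[OF assms, of k "Suc k"]
    by (simp add: sum.atLeastLessThan_concat)
qed simp

lemma sum_dyadic_intervals: "(\<Sum>t<2^d. \<Sum>i\<in>dyadic_interval n d t. f i) = (\<Sum>i<n. f i)"
  unfolding dyadic_interval_def
  using sum_consecutive_intervals[of "dyadic_cut n d" f "2^d"] dyadic_cut_mono
  by (simp add: atLeast0LessThan monoI)

lemma sum_dyadic_block: "(\<Sum>p\<in>dyadic_block n d t u. g p) = (\<Sum>i\<in>dyadic_interval n d t. \<Sum>j\<in>dyadic_interval n d u. g (i, j))"
  unfolding dyadic_block_def by (simp add: sum.cartesian_product)

lemma sum_dyadic_blocks: "(\<Sum>t<2^d. \<Sum>u<2^d. \<Sum>p\<in>dyadic_block n d t u. g p) = (\<Sum>p\<in>grid n. g p)"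
proof -
  have "(\<Sum>t<2^d. \<Sum>u<2^d. \<Sum>p\<in>dyadic_block n d t u. g p)
      = (\<Sum>t<2^d. \<Sum>i\<in>dyadic_interval n d t. \<Sum>u<2^d. \<Sum>j\<in>dyadic_interval n d u. g (i, j))"
    unfolding sum_dyadic_block by (intro sum.cong refl sum.swap)
  also have "\<dots> = (\<Sum>i<n. \<Sum>j<n. g (i, j))"
    by (simp add: sum_dyadic_intervals)
  also have "\<dots> = (\<Sum>p\<in>grid n. g p)"
    unfolding grid_def by (simp add: sum.cartesian_product)
  finally show ?thesis .
qed

lemma sum_dyadic_interval_children:
  "(\<Sum>i\<in>dyadic_interval n d t. f i)
     = (\<Sum>i\<in>dyadic_interval n (Suc d) (2 * t). f i) + (\<Sum>i\<in>dyadic_interval n (Suc d) (Suc (2 * t)). f i)"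
proof -
  have "dyadic_cut n (Suc d) (2 * t) \<le> dyadic_cut n (Suc d) (Suc (2 * t))"
    and "dyadic_cut n (Suc d) (Suc (2 * t)) \<le> dyadic_cut n (Suc d) (2 * Suc t)"
    by (intro dyadic_cut_mono; simp)+
  then show ?thesis
    unfolding dyadic_interval_def
    by (simp add: sum.atLeastLessThan_concat dyadic_cut_double[of n d "Suc t", symmetric]
        dyadic_cut_double[of n d t, symmetric])
qed

lemma sum_dyadic_block_children:
  "(\<Sum>p\<in>dyadic_block n d t u. g p :: 'a :: comm_monoid_add) =
     (\<Sum>p\<in>dyadic_block n (Suc d) (2 * t) (2 * u). g p) + (\<Sum>p\<in>dyadic_block n (Suc d) (2 * t) (Suc (2 * u)). g p)
   + (\<Sum>p\<in>dyadic_block n (Suc d) (Suc (2 * t)) (2 * u). g p) + (\<Sum>p\<in>dyadic_block n (Suc d) (Suc (2 * t)) (Suc (2 * u)). g p)"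
  unfolding sum_dyadic_block sum_dyadic_interval_children[where t = t] sum_dyadic_interval_children[where t = u]
  by (simp add: sum.distrib ac_simps)

lemma sum_lessThan_double:
  "(\<Sum>t<2 * k. g t) = (\<Sum>t<k. g (2 * t) + g (Suc (2 * t)) :: 'a :: comm_monoid_add)"
  by (induction k) (simp_all add: ac_simps)

section \<open>Total variation and block averages\<close>

definition hjump :: "nat \<Rightarrow> (nat \<times> nat \<Rightarrow> real) \<Rightarrow> nat \<times> nat \<Rightarrow> real" where
  "hjump n \<theta> p = (if Suc (snd p) < n then \<bar>\<theta> (fst p, Suc (snd p)) - \<theta> p\<bar> else 0)"

definition vjump :: "nat \<Rightarrow> (nat \<times> nat \<Rightarrow> real) \<Rightarrow> nat \<times> nat \<Rightarrow> real" where
  "vjump n \<theta> p = (if Suc (fst p) < n then \<bar>\<theta> (Suc (fst p), snd p) - \<theta> p\<bar> else 0)"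

definition TV_on :: "nat \<Rightarrow> (nat \<times> nat \<Rightarrow> real) \<Rightarrow> (nat \<times> nat) set \<Rightarrow> real" where
  "TV_on n \<theta> P = (\<Sum>p\<in>P. hjump n \<theta> p + vjump n \<theta> p)"

definition avg :: "(nat \<times> nat \<Rightarrow> real) \<Rightarrow> (nat \<times> nat) set \<Rightarrow> real" where
  "avg \<theta> P = (\<Sum>p\<in>P. \<theta> p) / real (card P)"

lemma hjump_nonneg: "0 \<le> hjump n \<theta> p"
  by (simp add: hjump_def)

lemma vjump_nonneg: "0 \<le> vjump n \<theta> p"
  by (simp add: vjump_def)

lemma TV_on_nonneg: "0 \<le> TV_on n \<theta> P"
  unfolding TV_on_def by (intro sum_nonneg add_nonneg_nonneg hjump_nonneg vjump_nonneg)

lemma TV_on_grid: "TV_on n \<theta> (grid n) = TV n \<theta>"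
proof -
  have drop_last: "(\<Sum>j<n. if Suc j < n then f j else 0) = (\<Sum>j<n - 1. f j :: real)" for f
    by (cases n) (auto intro!: sum.cong)
  have "TV_on n \<theta> (grid n) = (\<Sum>i<n. \<Sum>j<n. hjump n \<theta> (i, j)) + (\<Sum>i<n. \<Sum>j<n. vjump n \<theta> (i, j))"
    unfolding TV_on_def grid_def sum.distrib by (simp add: sum.cartesian_product)
  also have "(\<Sum>i<n. \<Sum>j<n. hjump n \<theta> (i, j)) = (\<Sum>i<n. \<Sum>j<n - 1. \<bar>\<theta> (i, Suc j) - \<theta> (i, j)\<bar>)"
    unfolding hjump_def by (simp add: drop_last)
  also have "(\<Sum>i<n. \<Sum>j<n. vjump n \<theta> (i, j))
      = (\<Sum>i<n. if Suc i < n then (\<Sum>j<n. \<bar>\<theta> (Suc i, j) - \<theta> (i, j)\<bar>) else 0)"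
    unfolding vjump_def by (auto intro!: sum.cong)
  finally show ?thesis unfolding TV_def drop_last .
qed

lemma TV_on_rectangle:
  "TV_on n \<theta> (A \<times> J) = (\<Sum>i\<in>A. \<Sum>k\<in>J. hjump n \<theta> (i, k)) + (\<Sum>j\<in>J. \<Sum>k\<in>A. vjump n \<theta> (k, j))"
  unfolding TV_on_def sum.distrib
  by (simp add: sum.cartesian_product' sum.swap[where A = A and B = J])

lemma abs_diff_le_sum_steps:
  fixes f g :: "nat \<Rightarrow> real"
  assumes j: "j \<in> {c1..<c2}" "j' \<in> {c1..<c2}"
    and step: "\<And>k. c1 \<le> k \<Longrightarrow> Suc k < c2 \<Longrightarrow> \<bar>f (Suc k) - f k\<bar> \<le> g k"
    and g: "\<And>k. 0 \<le> g k"
  shows "\<bar>f j - f j'\<bar> \<le> (\<Sum>k\<in>{c1..<c2}. g k)"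
proof -
  have ordered: "\<bar>f y - f x\<bar> \<le> (\<Sum>k\<in>{c1..<c2}. g k)"
    if "x \<le> y" "x \<in> {c1..<c2}" "y \<in> {c1..<c2}" for x y
  proof -
    have "\<bar>f y - f x\<bar> \<le> (\<Sum>k\<in>{x..<y}. g k)"
      using \<open>x \<le> y\<close> \<open>y \<in> {c1..<c2}\<close>
    proof (induction y rule: dec_induct)
      case (step k)
      have "\<bar>f (Suc k) - f x\<bar> \<le> \<bar>f k - f x\<bar> + \<bar>f (Suc k) - f k\<bar>" by simp
      also have "\<dots> \<le> (\<Sum>k\<in>{x..<k}. g k) + g k"
        using step that by (intro add_mono step.IH assms(3)) auto
      finally show ?case using step by simp
    qed simp
    also have "\<dots> \<le> (\<Sum>k\<in>{c1..<c2}. g k)"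
      using that by (intro sum_mono2 g) auto
    finally show ?thesis .
  qed
  show ?thesis
    using ordered[of j j'] ordered[of j' j] j by (cases "j \<le> j'") (auto simp: abs_minus_commute)
qed

lemma abs_avg_diff_le:
  fixes \<theta> :: "nat \<times> nat \<Rightarrow> real"
  assumes fin: "finite A" "finite J" and sub: "A' \<subseteq> A" "J' \<subseteq> J" and ne: "A' \<noteq> {}" "J' \<noteq> {}"
    and osc: "\<And>q1 q2 r1 r2. q1 \<in> A \<Longrightarrow> q2 \<in> J \<Longrightarrow> r1 \<in> A \<Longrightarrow> r2 \<in> J \<Longrightarrow>
          \<bar>\<theta> (q1, q2) - \<theta> (r1, r2)\<bar> \<le> H q1 + W r2"
  shows "\<bar>avg \<theta> (A' \<times> J') - avg \<theta> (A \<times> J)\<bar> \<le> (\<Sum>i\<in>A'. H i) / card A' + (\<Sum>j\<in>J. W j) / card J"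
proof -
  define b where "b = A' \<times> J'"
  define P where "P = A \<times> J"
  have finite': "finite A'" "finite J'" using fin sub finite_subset by auto
  have cb: "real (card b) = real (card A') * real (card J')" and cP: "real (card P) = real (card A) * real (card J)"
    by (simp_all add: b_def P_def card_cartesian_product)
  have pos: "0 < real (card A')" "0 < real (card J')" "0 < real (card A)" "0 < real (card J)"
    using ne sub fin finite' by (auto simp: card_gt_0_iff)
  have "\<bar>\<Sum>q\<in>b. \<Sum>r\<in>P. \<theta> q - \<theta> r\<bar> \<le> (\<Sum>q\<in>b. \<Sum>r\<in>P. H (fst q) + W (snd r))"
  proof (rule order_trans[OF sum_abs sum_mono], rule order_trans[OF sum_abs sum_mono])
    fix q r assume "q \<in> b" "r \<in> P"
    then show "\<bar>\<theta> q - \<theta> r\<bar> \<le> H (fst q) + W (snd r)"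
      using sub osc unfolding b_def P_def by (cases q, cases r) (auto simp: subset_iff)
  qed
  also have "\<dots> = real (card P) * (\<Sum>q\<in>b. H (fst q)) + real (card b) * (\<Sum>r\<in>P. W (snd r))"
    by (simp add: sum.distrib sum_distrib_left mult.commute)
  also have "\<dots> = real (card P) * (real (card J') * (\<Sum>i\<in>A'. H i)) + real (card b) * (real (card A) * (\<Sum>j\<in>J. W j))"
    unfolding b_def P_def by (simp add: sum.cartesian_product' sum_distrib_left)
  finally have num: "\<bar>\<Sum>q\<in>b. \<Sum>r\<in>P. \<theta> q - \<theta> r\<bar>
      \<le> real (card P) * (real (card J') * (\<Sum>i\<in>A'. H i)) + real (card b) * (real (card A) * (\<Sum>j\<in>J. W j))" .
  have bP: "0 < real (card b)" "0 < real (card P)" using pos cb cP by simp_all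
  have "(\<Sum>q\<in>b. \<Sum>r\<in>P. \<theta> q - \<theta> r) = real (card P) * (\<Sum>q\<in>b. \<theta> q) - real (card b) * (\<Sum>r\<in>P. \<theta> r)"
    by (simp add: sum_subtractf sum_distrib_left sum_distrib_right mult.commute)
  then have "avg \<theta> b - avg \<theta> P = (\<Sum>q\<in>b. \<Sum>r\<in>P. \<theta> q - \<theta> r) / (real (card b) * real (card P))"
    using bP unfolding avg_def by (simp add: field_simps)
  then have "\<bar>avg \<theta> b - avg \<theta> P\<bar> = \<bar>\<Sum>q\<in>b. \<Sum>r\<in>P. \<theta> q - \<theta> r\<bar> / (real (card b) * real (card P))"
    using bP by (simp add: abs_divide)
  also have "\<dots> \<le> (real (card P) * (real (card J') * (\<Sum>i\<in>A'. H i)) + real (card b) * (real (card A) * (\<Sum>j\<in>J. W j)))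
      / (real (card b) * real (card P))"
    using num bP by (intro divide_right_mono) auto
  also have "\<dots> = (\<Sum>i\<in>A'. H i) / card A' + (\<Sum>j\<in>J. W j) / card J"
    using pos unfolding cb cP by (simp add: field_simps)
  finally show ?thesis unfolding b_def P_def .
qed

lemma abs_avg_diff_le_TV_on:
  fixes m :: real
  assumes sub: "A' \<subseteq> {a1..<a2}" "J' \<subseteq> {c1..<c2}" and le: "a2 \<le> n" "c2 \<le> n"
    and ne: "A' \<noteq> {}" "J' \<noteq> {}" and m: "0 < m" "m \<le> card A'" "m \<le> card {c1..<c2}"
  shows "\<bar>avg \<theta> (A' \<times> J') - avg \<theta> ({a1..<a2} \<times> {c1..<c2})\<bar> \<le> TV_on n \<theta> ({a1..<a2} \<times> {c1..<c2}) / m"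
proof -
  define H where "H i = (\<Sum>k\<in>{c1..<c2}. hjump n \<theta> (i, k))" for i
  define W where "W j = (\<Sum>k\<in>{a1..<a2}. vjump n \<theta> (k, j))" for j
  have H0: "0 \<le> H i" for i unfolding H_def by (intro sum_nonneg hjump_nonneg)
  have W0: "0 \<le> W j" for j unfolding W_def by (intro sum_nonneg vjump_nonneg)
  have "\<bar>avg \<theta> (A' \<times> J') - avg \<theta> ({a1..<a2} \<times> {c1..<c2})\<bar>
      \<le> (\<Sum>i\<in>A'. H i) / card A' + (\<Sum>j\<in>{c1..<c2}. W j) / card {c1..<c2}"
  proof (rule abs_avg_diff_le[OF _ _ sub ne])
    fix q1 q2 r1 r2 assume q: "q1 \<in> {a1..<a2}" "q2 \<in> {c1..<c2}" "r1 \<in> {a1..<a2}" "r2 \<in> {c1..<c2}"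
    \<comment> \<open>move along row \<open>q1\<close> to column \<open>r2\<close>, then along column \<open>r2\<close> to row \<open>r1\<close>\<close>
    have "\<bar>\<theta> (q1, q2) - \<theta> (r1, r2)\<bar> \<le> \<bar>\<theta> (q1, q2) - \<theta> (q1, r2)\<bar> + \<bar>\<theta> (q1, r2) - \<theta> (r1, r2)\<bar>"
      by simp
    also have "\<dots> \<le> H q1 + W r2"
      unfolding H_def W_def using q le
      by (intro add_mono abs_diff_le_sum_steps hjump_nonneg vjump_nonneg)
         (auto simp: hjump_def vjump_def)
    finally show "\<bar>\<theta> (q1, q2) - \<theta> (r1, r2)\<bar> \<le> H q1 + W r2" .
  qed auto
  also have "\<dots> \<le> (\<Sum>i\<in>{a1..<a2}. H i) / m + (\<Sum>j\<in>{c1..<c2}. W j) / m"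
  proof (intro add_mono)
    have "(\<Sum>i\<in>A'. H i) / card A' \<le> (\<Sum>i\<in>A'. H i) / m"
      using m by (intro divide_left_mono sum_nonneg H0) auto
    also have "\<dots> \<le> (\<Sum>i\<in>{a1..<a2}. H i) / m"
      using m sub by (intro divide_right_mono sum_mono2 H0) auto
    finally show "(\<Sum>i\<in>A'. H i) / card A' \<le> (\<Sum>i\<in>{a1..<a2}. H i) / m" .
    show "(\<Sum>j\<in>{c1..<c2}. W j) / card {c1..<c2} \<le> (\<Sum>j\<in>{c1..<c2}. W j) / m"
      using m by (intro divide_left_mono sum_nonneg W0) auto
  qed
  also have "\<dots> = TV_on n \<theta> ({a1..<a2} \<times> {c1..<c2}) / m"
    unfolding TV_on_rectangle H_def W_def by (simp add: add_divide_distrib)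
  finally show ?thesis .
qed

section \<open>The multiscale decomposition\<close>

definition multiscale_sum :: "nat \<Rightarrow> (nat \<times> nat \<Rightarrow> real) \<Rightarrow> (nat \<times> nat \<Rightarrow> real) \<Rightarrow> nat \<Rightarrow> real" where
  "multiscale_sum n Z \<theta> d =
     (\<Sum>t<2^d. \<Sum>u<2^d. (\<Sum>p\<in>dyadic_block n d t u. Z p) * avg \<theta> (dyadic_block n d t u))"

lemma multiscale_sum_0: "multiscale_sum n Z \<theta> 0 = (\<Sum>p\<in>grid n. Z p) * mean n \<theta>"
proof -
  have "dyadic_block n 0 0 0 = grid n"
    by (simp add: dyadic_block_def dyadic_interval_def dyadic_cut_def grid_def atLeast0LessThan)
  moreover have "avg \<theta> (grid n) = mean n \<theta>"
    by (simp add: avg_def mean_def grid_def card_cartesian_product power2_eq_square)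
  ultimately show ?thesis by (simp add: multiscale_sum_def)
qed

lemma multiscale_sum_fine:
  assumes "n \<le> 2^d"
  shows "multiscale_sum n Z \<theta> d = inner_mat n Z \<theta>"
proof -
  have singleton: "(\<Sum>p\<in>A \<times> B. Z p) * avg \<theta> (A \<times> B) = (\<Sum>p\<in>A \<times> B. Z p * \<theta> p)"
    if "finite A" "finite B" "card A \<le> 1" "card B \<le> 1" for A B
  proof (cases "A = {} \<or> B = {}")
    case False
    then have "card A = 1" "card B = 1" using that by (auto simp: le_Suc_eq)
    then obtain a b where "A = {a}" "B = {b}" by (auto simp: card_1_singleton_iff)
    then show ?thesis by (simp add: avg_def)
  qed auto
  have "multiscale_sum n Z \<theta> d = (\<Sum>t<2^d. \<Sum>u<2^d. \<Sum>p\<in>dyadic_block n d t u. Z p * \<theta> p)"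
    unfolding multiscale_sum_def dyadic_block_def
    by (intro sum.cong refl singleton card_dyadic_interval_le_1 assms finite_dyadic_interval)
  then show ?thesis unfolding inner_mat_def sum_dyadic_blocks .
qed

lemma multiscale_sum_Suc_diff:
  "multiscale_sum n Z \<theta> (Suc d) - multiscale_sum n Z \<theta> d =
     (\<Sum>t<2^Suc d. \<Sum>u<2^Suc d. (\<Sum>p\<in>dyadic_block n (Suc d) t u. Z p) *
        (avg \<theta> (dyadic_block n (Suc d) t u) - avg \<theta> (dyadic_block n d (t div 2) (u div 2))))"
proof -
  define z where "z t u = (\<Sum>p\<in>dyadic_block n (Suc d) t u. Z p)" for t u
  define a where "a t u = avg \<theta> (dyadic_block n d t u)" for t u
  \<comment> \<open>the level-\<open>d\<close> sum, with each block sum of \<open>Z\<close> split into its four children\<close>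
  have "(\<Sum>t<2^Suc d. \<Sum>u<2^Suc d. z t u * a (t div 2) (u div 2))
      = (\<Sum>t<2^d. \<Sum>u<2^d. (z (2*t) (2*u) + z (2*t) (Suc (2*u)) + z (Suc (2*t)) (2*u)
           + z (Suc (2*t)) (Suc (2*u))) * a t u)"
    unfolding power_Suc sum_lessThan_double sum.distrib[symmetric] by (simp add: algebra_simps)
  also have "\<dots> = multiscale_sum n Z \<theta> d"
    unfolding multiscale_sum_def z_def a_def sum_dyadic_block_children[where g = Z, symmetric] ..
  finally have "multiscale_sum n Z \<theta> d = (\<Sum>t<2^Suc d. \<Sum>u<2^Suc d. z t u * a (t div 2) (u div 2))" ..
  then show ?thesis
    by (simp add: multiscale_sum_def z_def a_def right_diff_distrib sum_subtractf)
qed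

text \<open>A lower bound for the side lengths of the nonempty level-\<open>Suc d\<close> intervals; it is also at least
  half of their maximal length.\<close>

definition block_scale :: "nat \<Rightarrow> nat \<Rightarrow> real" where
  "block_scale n d = max 1 (real (n div 2^Suc d))"

lemma block_scale_pos: "0 < block_scale n d"
  by (simp add: block_scale_def)

lemma card_dyadic_block_le: "real (card (dyadic_block n (Suc d) t u)) \<le> 4 * (block_scale n d)^2"
proof -
  have side: "real (card (dyadic_interval n (Suc d) t)) \<le> 2 * block_scale n d" for t
    using card_dyadic_interval_le[of n "Suc d" t] unfolding block_scale_def by linarith
  have "real (card (dyadic_block n (Suc d) t u))
      = real (card (dyadic_interval n (Suc d) t)) * real (card (dyadic_interval n (Suc d) u))"
    by (simp add: dyadic_block_def card_cartesian_product)
  also have "\<dots> \<le> (2 * block_scale n d) * (2 * block_scale n d)"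
    using side[of t] side[of u] by (intro mult_mono) auto
  finally show ?thesis by (simp add: power2_eq_square)
qed

lemma abs_avg_child_diff_le:
  assumes t: "t < 2^Suc d" and u: "u < 2^Suc d" and ne: "dyadic_block n (Suc d) t u \<noteq> {}"
  shows "\<bar>avg \<theta> (dyadic_block n (Suc d) t u) - avg \<theta> (dyadic_block n d (t div 2) (u div 2))\<bar>
    \<le> TV_on n \<theta> (dyadic_block n d (t div 2) (u div 2)) / block_scale n d"
proof -
  have ne': "dyadic_interval n (Suc d) t \<noteq> {}" "dyadic_interval n (Suc d) u \<noteq> {}"
    using ne by (auto simp: dyadic_block_def)
  have large: "block_scale n d \<le> card (dyadic_interval n (Suc d) s)" if "dyadic_interval n (Suc d) s \<noteq> {}" for s
    using that card_dyadic_interval_ge[of n "Suc d" s]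
    by (auto simp: block_scale_def Suc_le_eq card_gt_0_iff)
  have "card (dyadic_interval n (Suc d) u) \<le> card (dyadic_interval n d (u div 2))"
    by (intro card_mono dyadic_interval_subset_parent) simp
  then have large': "block_scale n d \<le> card (dyadic_interval n d (u div 2))"
    using large[OF ne'(2)] by linarith
  have "t div 2 < 2^d" "u div 2 < 2^d" using t u by auto
  then have "dyadic_cut n d (Suc (t div 2)) \<le> n" "dyadic_cut n d (Suc (u div 2)) \<le> n"
    by (simp_all add: dyadic_cut_le)
  from abs_avg_diff_le_TV_on[OF
      dyadic_interval_subset_parent[of n d t, unfolded dyadic_interval_def[of n d]]
      dyadic_interval_subset_parent[of n d u, unfolded dyadic_interval_def[of n d]]
      this ne' block_scale_pos large[OF ne'(1)] large'[unfolded dyadic_interval_def]]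
  show ?thesis by (simp add: dyadic_block_def dyadic_interval_def)
qed

lemma multiscale_sum_Suc_diff_le:
  assumes L: "\<And>t u. t < 2^Suc d \<Longrightarrow> u < 2^Suc d \<Longrightarrow>
      \<bar>\<Sum>p\<in>dyadic_block n (Suc d) t u. Z p\<bar> / block_scale n d \<le> L"
  shows "multiscale_sum n Z \<theta> (Suc d) - multiscale_sum n Z \<theta> d \<le> 4 * L * TV n \<theta>"
proof -
  have "multiscale_sum n Z \<theta> (Suc d) - multiscale_sum n Z \<theta> d
      \<le> (\<Sum>t<2^Suc d. \<Sum>u<2^Suc d. L * TV_on n \<theta> (dyadic_block n d (t div 2) (u div 2)))"
    unfolding multiscale_sum_Suc_diff
  proof (intro sum_mono)
    fix t u :: nat assume "t \<in> {..<2^Suc d}" "u \<in> {..<2^Suc d}"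
    then have tu: "t < 2^Suc d" "u < 2^Suc d" by auto
    let ?z = "\<Sum>p\<in>dyadic_block n (Suc d) t u. Z p"
    let ?\<delta> = "avg \<theta> (dyadic_block n (Suc d) t u) - avg \<theta> (dyadic_block n d (t div 2) (u div 2))"
    let ?W = "TV_on n \<theta> (dyadic_block n d (t div 2) (u div 2))"
    show "?z * ?\<delta> \<le> L * ?W"
    proof (cases "dyadic_block n (Suc d) t u = {}")
      case True
      then show ?thesis using L[OF tu] TV_on_nonneg[of n \<theta>] block_scale_pos[of n d]
        by (simp add: zero_le_divide_iff)
    next
      case False
      have "?z * ?\<delta> \<le> \<bar>?z\<bar> * \<bar>?\<delta>\<bar>" by (metis abs_ge_self abs_mult)
      also have "\<dots> \<le> \<bar>?z\<bar> * (?W / block_scale n d)"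
        by (intro mult_left_mono abs_avg_child_diff_le[OF tu False]) simp
      also have "\<dots> = \<bar>?z\<bar> / block_scale n d * ?W" by simp
      also have "\<dots> \<le> L * ?W" by (intro mult_right_mono L[OF tu] TV_on_nonneg)
      finally show ?thesis .
    qed
  qed
  also have "\<dots> = 4 * (\<Sum>t<2^d. \<Sum>u<2^d. L * TV_on n \<theta> (dyadic_block n d t u))"
    unfolding power_Suc sum_lessThan_double by (simp add: sum_distrib_left)
  also have "\<dots> = 4 * L * TV n \<theta>"
    unfolding TV_on_def sum_distrib_left[symmetric] sum_dyadic_blocks TV_on_grid[symmetric] by simp
  finally show ?thesis .
qed

lemma inner_mat_le_multiscale:
  assumes D: "n \<le> 2^D" and mean: "mean n \<theta> = 0"
    and L: "\<And>d t u. d < D \<Longrightarrow> t < 2^Suc d \<Longrightarrow> u < 2^Suc d \<Longrightarrow>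
      \<bar>\<Sum>p\<in>dyadic_block n (Suc d) t u. Z p\<bar> / block_scale n d \<le> L"
  shows "inner_mat n Z \<theta> \<le> 4 * real D * L * TV n \<theta>"
proof -
  have "inner_mat n Z \<theta> = (\<Sum>d<D. multiscale_sum n Z \<theta> (Suc d) - multiscale_sum n Z \<theta> d)"
    using multiscale_sum_fine[OF D] multiscale_sum_0 mean by (simp add: sum_lessThan_telescope)
  also have "\<dots> \<le> (\<Sum>d<D. 4 * L * TV n \<theta>)"
    by (intro sum_mono multiscale_sum_Suc_diff_le L) auto
  finally show ?thesis by simp
qed

section \<open>Chaining\<close>

lemma exp_abs_le_sum_exp:
  fixes f :: "'a \<Rightarrow> real"
  assumes "finite I" "i \<in> I"
  shows "exp \<bar>f i\<bar> \<le> (\<Sum>j\<in>I. exp (f j) + exp (- f j))"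
proof -
  have "exp \<bar>f i\<bar> \<le> exp (f i) + exp (- f i)" by (simp add: abs_if add_increasing add_increasing2)
  also have "\<dots> \<le> (\<Sum>j\<in>I. exp (f j) + exp (- f j))"
    using assms by (intro member_le_sum add_nonneg_nonneg) auto
  finally show ?thesis .
qed

lemma abs_le_ln_sum_exp:
  fixes f :: "'a \<Rightarrow> real"
  assumes "finite I" "i \<in> I"
  shows "\<bar>f i\<bar> \<le> ln (\<Sum>j\<in>I. exp (f j) + exp (- f j))"
  using exp_abs_le_sum_exp[OF assms, of f]
  by (metis exp_gt_zero exp_le_cancel_iff exp_ln less_le_trans)

definition dyadic_index :: "nat \<Rightarrow> (nat \<times> nat \<times> nat) set" where
  "dyadic_index D = (SIGMA d:{..<D}. {..<2^Suc d} \<times> {..<2^Suc d})"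

definition scaled_block_sum :: "nat \<Rightarrow> nat \<times> nat \<times> nat \<Rightarrow> (nat \<times> nat \<Rightarrow> real) \<Rightarrow> real" where
  "scaled_block_sum n k Z =
     (case k of (d, t, u) \<Rightarrow> (\<Sum>p\<in>dyadic_block n (Suc d) t u. Z p) / block_scale n d)"

definition exp_moment_sum :: "nat \<Rightarrow> nat \<Rightarrow> (nat \<times> nat \<Rightarrow> real) \<Rightarrow> real" where
  "exp_moment_sum n D Z =
     (\<Sum>k\<in>dyadic_index D. exp (scaled_block_sum n k Z) + exp (- scaled_block_sum n k Z))"

lemma finite_dyadic_index [simp]: "finite (dyadic_index D)"
  by (simp add: dyadic_index_def)

lemma card_dyadic_index_le: "real (card (dyadic_index D)) \<le> real D * 4^D"
proof -
  have "real (card (dyadic_index D)) = (\<Sum>d<D. (4::real)^Suc d)"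
    by (simp add: dyadic_index_def power_mult_distrib[symmetric])
  also have "\<dots> \<le> (\<Sum>d<D. 4^D)"
    by (intro sum_mono power_increasing) auto
  finally show ?thesis by simp
qed

lemma abs_scaled_block_sum_le:
  "k \<in> dyadic_index D \<Longrightarrow> \<bar>scaled_block_sum n k Z\<bar> \<le> ln (exp_moment_sum n D Z)"
  unfolding exp_moment_sum_def by (rule abs_le_ln_sum_exp) simp_all

lemma exp_moment_sum_ge_1: "1 \<le> D \<Longrightarrow> 1 \<le> exp_moment_sum n D Z"
  unfolding exp_moment_sum_def
  by (rule order_trans[OF one_le_exp_iff[THEN iffD2] exp_abs_le_sum_exp[of _ "(0, 0, 0)"]])
    (auto simp: dyadic_index_def)

lemma measurable_exp_scaled_block_sum:
  assumes "k \<in> dyadic_index D"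
  shows "(\<lambda>Z. exp (c * scaled_block_sum n k Z)) \<in> borel_measurable (gauss_mat n)"
proof -
  obtain d t u where "k = (d, t, u)" "t < 2^Suc d" "u < 2^Suc d"
    using assms by (auto simp: dyadic_index_def)
  then have "scaled_block_sum n k \<in> borel_measurable (gauss_mat n)"
    unfolding scaled_block_sum_def
    by (simp del: power_Suc add: borel_measurable_divide measurable_gauss_mat_sum dyadic_block_subset_grid)
  then show ?thesis by measurable
qed

lemma nn_integral_exp_scaled_block_sum:
  assumes k: "k \<in> dyadic_index D" and c: "\<bar>c\<bar> = 1"
  shows "(\<integral>\<^sup>+ Z. ennreal (exp (c * scaled_block_sum n k Z)) \<partial>gauss_mat n) \<le> ennreal (exp 2)"
proof -
  obtain d t u where k_eq: "k = (d, t, u)" and tu: "t < 2^Suc d" "u < 2^Suc d"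
    using k by (auto simp: dyadic_index_def)
  let ?b = "dyadic_block n (Suc d) t u" and ?m = "block_scale n d"
  have m: "0 < ?m" by (rule block_scale_pos)
  have "(\<integral>\<^sup>+ Z. ennreal (exp (c * scaled_block_sum n k Z)) \<partial>gauss_mat n)
      = (\<integral>\<^sup>+ Z. ennreal (exp (c / ?m * (\<Sum>p\<in>?b. Z p))) \<partial>gauss_mat n)"
    by (simp add: k_eq scaled_block_sum_def)
  also have "\<dots> = ennreal (exp (real (card ?b) * (c / ?m)^2 / 2))"
    by (intro nn_integral_exp_gauss_mat_sum dyadic_block_subset_grid tu)
  also have "\<dots> \<le> ennreal (exp 2)"
  proof (intro ennreal_leI exp_mono)
    have "c^2 = 1" using c by (metis power2_abs power_one)
    then have "real (card ?b) * (c / ?m)^2 / 2 = real (card ?b) / (2 * ?m^2)"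
      by (simp add: power_divide)
    also have "\<dots> \<le> 4 * ?m^2 / (2 * ?m^2)"
      using card_dyadic_block_le[of n d t u] m by (intro divide_right_mono) auto
    finally show "real (card ?b) * (c / ?m)^2 / 2 \<le> 2" using m by simp
  qed
  finally show ?thesis .
qed

lemma nn_integral_exp_moment_sum_le:
  "(\<integral>\<^sup>+ Z. ennreal (exp_moment_sum n D Z) \<partial>gauss_mat n) \<le> ennreal (2 * exp 2 * real D * 4^D)"
proof -
  let ?E = "\<lambda>c k. \<integral>\<^sup>+ Z. ennreal (exp (c * scaled_block_sum n k Z)) \<partial>gauss_mat n"
  have meas: "(\<lambda>Z. ennreal (exp (c * scaled_block_sum n k Z))) \<in> borel_measurable (gauss_mat n)"
    if "k \<in> dyadic_index D" for c k
    using measurable_exp_scaled_block_sum[OF that] by measurable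
  have "(\<integral>\<^sup>+ Z. ennreal (exp_moment_sum n D Z) \<partial>gauss_mat n)
      = (\<integral>\<^sup>+ Z. (\<Sum>k\<in>dyadic_index D. ennreal (exp (1 * scaled_block_sum n k Z))
          + ennreal (exp (- 1 * scaled_block_sum n k Z))) \<partial>gauss_mat n)"
    unfolding exp_moment_sum_def
    by (intro nn_integral_cong, subst sum_ennreal[symmetric]) (auto intro: add_nonneg_nonneg)
  also have "\<dots> = (\<Sum>k\<in>dyadic_index D. \<integral>\<^sup>+ Z. ennreal (exp (1 * scaled_block_sum n k Z))
      + ennreal (exp (- 1 * scaled_block_sum n k Z)) \<partial>gauss_mat n)"
    by (intro nn_integral_sum borel_measurable_add meas)
  also have "\<dots> = (\<Sum>k\<in>dyadic_index D. ?E 1 k + ?E (- 1) k)"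
    by (intro sum.cong refl nn_integral_add meas)
  also have "\<dots> \<le> (\<Sum>k\<in>dyadic_index D. ennreal (exp 2) + ennreal (exp 2))"
    by (intro sum_mono add_mono nn_integral_exp_scaled_block_sum) auto
  also have "\<dots> = ennreal (2 * exp 2 * real (card (dyadic_index D)))"
    by (simp add: ennreal_plus[symmetric] ennreal_mult'[symmetric] ennreal_of_nat_eq_real_of_nat mult.commute
        del: ennreal_plus)
  also have "\<dots> \<le> ennreal (2 * exp 2 * real D * 4^D)"
    using card_dyadic_index_le[of D] by (intro ennreal_leI) (simp add: mult.assoc)
  finally show ?thesis .
qed

lemma inner_mat_le_ln_exp_moment_sum:
  assumes D: "1 \<le> D" "n \<le> 2^D" and \<theta>: "\<theta> \<in> K0 n V"
  shows "inner_mat n Z \<theta> \<le> 4 * real D * V * ln (exp_moment_sum n D Z)"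
proof -
  have TV: "TV n \<theta> \<le> V" and mean: "mean n \<theta> = 0" using \<theta> by (auto simp: K0_def)
  have "inner_mat n Z \<theta> \<le> 4 * real D * ln (exp_moment_sum n D Z) * TV n \<theta>"
  proof (rule inner_mat_le_multiscale[OF D(2) mean])
    fix d t u :: nat assume "d < D" "t < 2^Suc d" "u < 2^Suc d"
    then have "(d, t, u) \<in> dyadic_index D" by (simp add: dyadic_index_def)
    from abs_scaled_block_sum_le[OF this, of n Z]
    show "\<bar>\<Sum>p\<in>dyadic_block n (Suc d) t u. Z p\<bar> / block_scale n d \<le> ln (exp_moment_sum n D Z)"
      using block_scale_pos[of n d] by (simp add: scaled_block_sum_def)
  qed
  also have "\<dots> \<le> 4 * real D * ln (exp_moment_sum n D Z) * V"
    using TV exp_moment_sum_ge_1[OF D(1)] by (intro mult_left_mono) auto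
  finally show ?thesis by (simp add: mult_ac)
qed

lemma GW_K0_le:
  assumes D: "1 \<le> D" "n \<le> 2^D" and V: "0 \<le> V"
  shows "GW n (K0 n V) \<le> ennreal (4 * real D * V * ln (2 * exp 2 * real D * 4^D))"
proof -
  have "GW n (K0 n V) \<le> (\<integral>\<^sup>+ Z. ennreal (4 * real D * V * ln (exp_moment_sum n D Z)) \<partial>gauss_mat n)"
    unfolding GW_def
    by (intro nn_integral_mono SUP_least ennreal_leI inner_mat_le_ln_exp_moment_sum D)
  also have "\<dots> \<le> ennreal (4 * real D * V * ln (2 * exp 2 * real D * 4^D))"
  proof (rule nn_integral_ln_le[OF prob_space_gauss_mat])
    show "exp_moment_sum n D \<in> borel_measurable (gauss_mat n)"
      unfolding exp_moment_sum_def
      using measurable_exp_scaled_block_sum[of _ D 1 n] measurable_exp_scaled_block_sum[of _ D "- 1" n]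
      by (intro borel_measurable_sum borel_measurable_add) auto
    show "0 < exp_moment_sum n D Z" for Z
      using exp_moment_sum_ge_1[OF D(1)] by (rule less_le_trans[OF zero_less_one])
    have "exp 1 \<le> 1 * exp 2 * 1 * (1::real)" by simp
    also have "\<dots> \<le> 2 * exp 2 * real D * 4^D"
      using D(1) by (intro mult_mono one_le_power) auto
    finally show "exp 1 \<le> 2 * exp 2 * real D * 4^D" .
  qed (use V in \<open>auto intro: nn_integral_exp_moment_sum_le\<close>)
  finally show ?thesis .
qed

lemma ln_chaining_constant_le: "1 \<le> D \<Longrightarrow> ln (2 * exp 2 * real D * 4^D) \<le> 6 * real D"
proof -
  assume D: "1 \<le> D"
  have "ln (2 * exp 2 * real D * 4^D) = ln 2 + 2 + ln (real D) + real D * ln 4"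
    using D by (simp add: ln_mult ln_realpow)
  also have "\<dots> \<le> 1 + 2 + (real D - 1) + real D * 3"
    using ln_le_minus_one[of 2] ln_le_minus_one[of "real D"] ln_le_minus_one[of 4] D
    by (intro add_mono mult_left_mono) auto
  finally show ?thesis using D by simp
qed

lemma dyadic_level_exists: "2 \<le> (n::nat) \<Longrightarrow> \<exists>D. 1 \<le> D \<and> n \<le> 2^D \<and> 2^D < 2 * n"
proof -
  assume "2 \<le> n"
  then obtain e where "2^e < n \<and> n \<le> 2^(e + 1)" using ex_power_ivl2[of 2 n] by auto
  then show ?thesis by (intro exI[of _ "Suc e"]) auto
qed

lemma dyadic_level_le_ln:
  assumes n: "2 \<le> n" and D: "2^D < 2 * n"
  shows "real D \<le> 3 * ln (real n)"
proof -
  have "real D * ln 2 = ln (2^D)" by (simp add: ln_realpow)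
  also have "\<dots> < ln (2 * real n)"
  proof -
    have "real (2^D) < real (2 * n)" using D by (simp only: of_nat_less_iff)
    then show ?thesis using n by (subst ln_less_cancel_iff) auto
  qed
  also have "\<dots> = ln 2 + ln (real n)" using n by (simp add: ln_mult)
  also have "\<dots> \<le> 2 * ln (real n)" using n by simp
  finally have "real D * ln 2 < 2 * ln (real n)" .
  moreover have "real D * (2/3) \<le> real D * ln 2"
    using ln2_ge_two_thirds by (intro mult_left_mono) auto
  ultimately show ?thesis by linarith
qed

text \<open>The right-hand side of the theorem dominates \<open>V (ln n)^2\<close>: either \<open>V (ln n)^2 \<le> 1\<close>, or
  \<open>V > 1 / (ln n)^2 \<ge> 1 / n\<close> and then \<open>1 + 2 V n^2 \<ge> n\<close>.\<close>

lemma V_ln_sq_le: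
  assumes n: "2 \<le> n" and V: "0 < V"
  shows "V * ln (real n)^2 \<le> V * ln (real n) * ln (1 + 2 * V * (real n)^2) + 1"
proof (cases "V * ln (real n)^2 \<le> 1")
  case True
  have "0 \<le> V * ln (real n) * ln (1 + 2 * V * (real n)^2)" using V n by simp
  then show ?thesis using True by linarith
next
  case False
  have "ln (real n) \<le> sqrt (real n)"
  proof -
    have "ln (sqrt (real n) / exp 1) \<le> sqrt (real n) / exp 1 - 1" using n by (intro ln_le_minus_one) simp
    then have "ln (real n) \<le> sqrt (real n) * 2 / exp 1" using n by (simp add: ln_div ln_sqrt)
    also have "\<dots> \<le> sqrt (real n)"
      using exp_ge_add_one_self[of 1] by (simp add: divide_le_eq mult_left_mono)
    finally show ?thesis .
  qed
  then have "ln (real n)^2 \<le> sqrt (real n)^2" using n by (intro power_mono) auto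
  then have "ln (real n)^2 \<le> real n" by simp
  then have "real n < V * ln (real n)^2 * real n" using False n by simp
  also have "\<dots> \<le> V * real n * real n"
    using mult_left_mono[OF \<open>ln (real n)^2 \<le> real n\<close>, of "V * real n"] V by (simp add: mult_ac)
  finally have "real n \<le> 1 + 2 * V * (real n)^2" using V by (simp add: power2_eq_square)
  then have "ln (real n) \<le> ln (1 + 2 * V * (real n)^2)" using n by (intro ln_mono) auto
  then have "V * ln (real n) * ln (real n) \<le> V * ln (real n) * ln (1 + 2 * V * (real n)^2)"
    using V n by (intro mult_left_mono) auto
  then show ?thesis by (simp add: power2_eq_square)
qed

theorem lemma4p5:
  "\<exists>C>0. \<forall>(n::nat) (V::real). n \<ge> 2 \<longrightarrow> V > 0 \<longrightarrow>
     GW n (K0 n V) \<le> ennreal (C * (V * ln (real n) * ln (1 + 2 * V * (real n)^2) + 1))"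
proof (intro exI[of _ 216] conjI allI impI)
  fix n :: nat and V :: real
  assume n: "n \<ge> 2" and V: "V > 0"
  obtain D where D: "1 \<le> D" "n \<le> 2^D" "2^D < 2 * n" using dyadic_level_exists[OF n] by auto
  have "GW n (K0 n V) \<le> ennreal (4 * real D * V * ln (2 * exp 2 * real D * 4^D))"
    using GW_K0_le[OF D(1,2)] V by simp
  also have "\<dots> \<le> ennreal (216 * (V * ln (real n) * ln (1 + 2 * V * (real n)^2) + 1))"
  proof (rule ennreal_leI)
    have "4 * real D * V * ln (2 * exp 2 * real D * 4^D) \<le> 4 * real D * V * (6 * real D)"
      using ln_chaining_constant_le[OF D(1)] V by (intro mult_left_mono) auto
    also have "\<dots> = 24 * V * (real D)^2" by (simp add: power2_eq_square)
    also have "\<dots> \<le> 24 * V * (3 * ln (real n))^2"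
      using dyadic_level_le_ln[OF n D(3)] V by (intro mult_left_mono power_mono) auto
    also have "\<dots> \<le> 216 * (V * ln (real n) * ln (1 + 2 * V * (real n)^2) + 1)"
      using V_ln_sq_le[OF n V] by (simp add: power2_eq_square)
    finally show "4 * real D * V * ln (2 * exp 2 * real D * 4^D)
        \<le> 216 * (V * ln (real n) * ln (1 + 2 * V * (real n)^2) + 1)" .
  qed
  finally show "GW n (K0 n V) \<le> ennreal (216 * (V * ln (real n) * ln (1 + 2 * V * (real n)^2) + 1))" .
qed simp

end
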